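(* Let $f:\mathbb{R}^n\to\mathbb{R}$ be convex and differentiable with $\nabla f$ $L$-Lipschitz continuous, and assume $X^*$ is non-empty. Then the sequences $\{x^k\},\{z^k\}$ generated by Algorithm 3 (with $\nabla f(x^k)\ne0$ for all $k$) satisfy, for every $x^*\in X^*$ and every $k$, $$\|x^{k+1}-x^*\|^2\le\|x^k-x^*\|^2-\kappa_4\|x^k-z^k\|^2,$$ where $\kappa_4=\eta(2-\eta)\alpha_{\min}\left((1-\beta)\left(1-\frac{L\overline{h}}{4}\right)+\beta(1-\nu)\right)>0$ and $\alpha_{\min}=\frac{(1-\beta)\left(1-\frac{L\overline{h}}{4}\right)+\beta(1-\nu)}{2+2\beta^2\nu^2}$.
   Context: $X^*=\{x:\nabla f(x)=0\}$ (the set of minimizers of the convex $f$). Algorithm 3: parameters $0<\mu<\nu<1$, $0<\underline{h}<1\le\gamma_0^0\le\overline{h}<\frac4L$, $0\le\beta\le1$, $\theta\in(0,1)$, $\tau>1$, $\eta\in(0,2)$, starting point $x^0$; run while $\nabla f(x^k)\neq0$. At iteration $k$: for $\gamma>0$ let $z^k(\gamma)=x^k-\gamma\nabla f(x^k)$ and $r_k(\gamma)=\gamma\|\nabla f(z^k(\gamma))-\nabla f(x^k)\|/\|z^k(\gamma)-x^k\|$; starting from $\gamma_0^k$, while $r_k(\gamma_l^k)>\nu$ set $\gamma_{l+1}^k=\gamma_l^k\theta\min\{1,1/r_k(\gamma_l^k)\}$; let $h_k$ be the first $\gamma_l^k$ with $r_k(\gamma_l^k)\le\nu$. Then $z^k=x^k-h_k\nabla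 f(x^k)$ and $x^{k+1}=x^k-\eta\alpha_kh_k\big(\nabla f(x^k)-\beta(\nabla f(x^k)-\nabla f(z^k))\big)$ with $$\alpha_k=\frac{(1-\beta)\left(1-\frac{Lh_k}{4}\right)\|x^k-z^k\|^2+\beta\langle x^k-z^k,h_k\nabla f(z^k)\rangle}{h_k^2\|\nabla f(x^k)-\beta(\nabla f(x^k)-\nabla f(z^k))\|^2};$$ finally $\gamma_0^{k+1}=\mathbf{P}_{[\underline{h},\overline{h}]}(\tau h_k)$ if $r_k(h_k)\le\mu$, else $\gamma_0^{k+1}=\mathbf{P}_{[\underline{h},\overline{h}]}(h_k)$, where $\mathbf{P}_{[a,b]}$ is projection onto $[a,b]$. *)

theory Defs
  imports "HOL-Analysis.Analysis"
begin

definition alg3_r :: "('a::real_normed_vector \<Rightarrow> 'a) \<Rightarrow> 'a \<Rightarrow> real \<Rightarrow> real" where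
  "alg3_r g x \<gamma> =
     \<gamma> * norm (g (x - \<gamma> *\<^sub>R g x) - g x) / norm ((x - \<gamma> *\<^sub>R g x) - x)"

text \<open>Backtracking trial step sizes gamma_l (the update is only used while r > nu).\<close>
primrec alg3_bt :: "('a::real_normed_vector \<Rightarrow> 'a) \<Rightarrow> real \<Rightarrow> 'a \<Rightarrow> real \<Rightarrow> nat \<Rightarrow> real" where
  "alg3_bt g \<theta> x \<gamma>0 0 = \<gamma>0"
| "alg3_bt g \<theta> x \<gamma>0 (Suc l) =
     alg3_bt g \<theta> x \<gamma>0 l * \<theta> * min 1 (1 / alg3_r g x (alg3_bt g \<theta> x \<gamma>0 l))"

definition alg3_h :: "('a::real_normed_vector \<Rightarrow> 'a) \<Rightarrow> real \<Rightarrow> real \<Rightarrow> 'a \<Rightarrow> real \<Rightarrow> real" where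
  "alg3_h g \<nu> \<theta> x \<gamma>0 =
     alg3_bt g \<theta> x \<gamma>0 (LEAST l. alg3_r g x (alg3_bt g \<theta> x \<gamma>0 l) \<le> \<nu>)"

definition alg3_alpha :: "real \<Rightarrow> real \<Rightarrow> ('a::real_inner \<Rightarrow> 'a) \<Rightarrow> 'a \<Rightarrow> real \<Rightarrow> 'a \<Rightarrow> real" where
  "alg3_alpha L \<beta> g x h z =
     ((1 - \<beta>) * (1 - L * h / 4) * (norm (x - z))\<^sup>2 + \<beta> * inner (x - z) (h *\<^sub>R g z))
     / (h\<^sup>2 * (norm (g x - \<beta> *\<^sub>R (g x - g z)))\<^sup>2)"

definition proj_interval :: "real \<Rightarrow> real \<Rightarrow> real \<Rightarrow> real" where
  "proj_interval a b t = max a (min b t)"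

primrec alg3_state ::
  "('a::real_inner \<Rightarrow> 'a) \<Rightarrow> real \<Rightarrow> real \<Rightarrow> real \<Rightarrow> real \<Rightarrow> real \<Rightarrow> real \<Rightarrow> real \<Rightarrow> real \<Rightarrow> real
   \<Rightarrow> 'a \<Rightarrow> real \<Rightarrow> nat \<Rightarrow> 'a \<times> real" where
  "alg3_state g L \<mu> \<nu> hl hu \<beta> \<theta> \<tau> \<eta> x0 \<gamma>00 0 = (x0, \<gamma>00)"
| "alg3_state g L \<mu> \<nu> hl hu \<beta> \<theta> \<tau> \<eta> x0 \<gamma>00 (Suc k) =
    (let (x, \<gamma>0) = alg3_state g L \<mu> \<nu> hl hu \<beta> \<theta> \<tau> \<eta> x0 \<gamma>00 k;
         h = alg3_h g \<nu> \<theta> x \<gamma>0;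
         z = x - h *\<^sub>R g x;
         d = g x - \<beta> *\<^sub>R (g x - g z);
         x' = x - (\<eta> * alg3_alpha L \<beta> g x h z * h) *\<^sub>R d;
         \<gamma>0' = (if alg3_r g x h \<le> \<mu> then proj_interval hl hu (\<tau> * h)
                 else proj_interval hl hu h)
     in (x', \<gamma>0'))"

definition alg3_x where
  "alg3_x g L \<mu> \<nu> hl hu \<beta> \<theta> \<tau> \<eta> x0 \<gamma>00 k = fst (alg3_state g L \<mu> \<nu> hl hu \<beta> \<theta> \<tau> \<eta> x0 \<gamma>00 k)"

definition alg3_z where
  "alg3_z g L \<mu> \<nu> hl hu \<beta> \<theta> \<tau> \<eta> x0 \<gamma>00 k =
    (let (x, \<gamma>0) = alg3_state g L \<mu> \<nu> hl hu \<beta> \<theta> \<tau> \<eta> x0 \<gamma>00 k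
     in x - alg3_h g \<nu> \<theta> x \<gamma>0 *\<^sub>R g x)"

end

theory Submission
  imports Defs
begin

text \<open>
  Convexity and an L-Lipschitz gradient make g cocoercive,
  \<open>inner (g x - g y) (x - y) \<ge> (norm (g x - g y))\<^sup>2 / L\<close>.  Since g vanishes at a
  minimiser xs, this shows that the scaled direction \<open>h\<^sub>k d\<^sub>k\<close> of Algorithm 3 satisfies
  \<open>inner (h\<^sub>k d\<^sub>k) (x\<^sub>k - xs) \<ge> \<phi>\<^sub>k\<close>, where \<open>\<phi>\<^sub>k\<close> is the numerator of \<open>\<alpha>\<^sub>k\<close>.  Hence
  \<open>x\<^sub>k\<^sub>+\<^sub>1\<close> is the \<open>\<eta>\<close>-relaxed projection of \<open>x\<^sub>k\<close> onto a half-space containing every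
  minimiser, which decreases \<open>(norm (x\<^sub>k - xs))\<^sup>2\<close> by \<open>\<eta> (2 - \<eta>) \<phi>\<^sub>k\<^sup>2 / (norm (h\<^sub>k d\<^sub>k))\<^sup>2\<close>.
  The line-search condition \<open>r\<^sub>k(h\<^sub>k) \<le> \<nu>\<close> bounds \<open>\<phi>\<^sub>k\<close> from below by
  \<open>((1 - \<beta>) (1 - L hu / 4) + \<beta> (1 - \<nu>)) (norm (x\<^sub>k - z\<^sub>k))\<^sup>2\<close> and \<open>(norm (h\<^sub>k d\<^sub>k))\<^sup>2\<close>
  from above by \<open>(2 + 2 \<beta>\<^sup>2 \<nu>\<^sup>2) (norm (x\<^sub>k - z\<^sub>k))\<^sup>2\<close>.
\<close>

lemma has_real_derivative_along_line:
  fixes f :: "'a::real_inner \<Rightarrow> real"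
  assumes grad: "\<And>x. (f has_derivative (\<lambda>v. inner (g x) v)) (at x)"
  shows "((\<lambda>t. f (x + t *\<^sub>R v)) has_real_derivative inner (g (x + t *\<^sub>R v)) v) (at t)"
proof -
  have "((\<lambda>t. x + t *\<^sub>R v) has_derivative (\<lambda>s. s *\<^sub>R v)) (at t)"
    by (auto intro!: derivative_eq_intros)
  from has_derivative_compose[OF this grad]
  show ?thesis
    by (simp add: o_def has_field_derivative_def mult.commute[of _ "inner _ _"])
qed

lemma convex_on_along_line:
  assumes "convex_on UNIV f"
  shows "convex_on UNIV (\<lambda>t. f (x + t *\<^sub>R v))"
proof (rule convex_onI)
  fix t a b :: real
  assume "0 < t" "t < 1"
  have "x + ((1 - t) * a + t * b) *\<^sub>R v = (1 - t) *\<^sub>R (x + a *\<^sub>R v) + t *\<^sub>R (x + b *\<^sub>R v)"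
    by (simp add: algebra_simps)
  then show "f (x + ((1 - t) *\<^sub>R a + t *\<^sub>R b) *\<^sub>R v) \<le> (1 - t) * f (x + a *\<^sub>R v) + t * f (x + b *\<^sub>R v)"
    using convex_onD[OF assms, of t] \<open>0 < t\<close> \<open>t < 1\<close> by simp
qed simp

lemma convex_on_above_tangent_gradient:
  fixes f :: "'a::real_inner \<Rightarrow> real"
  assumes conv: "convex_on UNIV f"
    and grad: "\<And>x. (f has_derivative (\<lambda>v. inner (g x) v)) (at x)"
  shows "f x + inner (g x) (y - x) \<le> f y"
proof -
  have "inner (g x) (y - x) * (1 - 0) \<le> f (x + 1 *\<^sub>R (y - x)) - f (x + 0 *\<^sub>R (y - x))"
    using has_real_derivative_along_line[OF grad, of x "y - x" 0]
    by (intro convex_on_imp_above_tangent[OF convex_on_along_line[OF conv]])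
       (auto simp: has_field_derivative_at_within)
  then show ?thesis by simp
qed

lemma lipschitz_gradient_upper_bound:
  fixes f :: "'a::real_inner \<Rightarrow> real"
  assumes grad: "\<And>x. (f has_derivative (\<lambda>v. inner (g x) v)) (at x)"
    and Lip: "\<And>x y. norm (g x - g y) \<le> L * norm (x - y)"
  shows "f y \<le> f x + inner (g x) (y - x) + L / 2 * (norm (y - x))\<^sup>2"
proof -
  define v where "v = y - x"
  define \<phi> where "\<phi> t = f (x + t *\<^sub>R v) - t * inner (g x) v - L / 2 * t\<^sup>2 * (norm v)\<^sup>2" for t
  have "\<phi> 1 \<le> \<phi> 0"
  proof (rule DERIV_nonpos_imp_nonincreasing[of 0 1 \<phi>])
    fix t :: real
    assume t: "0 \<le> t" "t \<le> 1"
    have "(\<phi> has_real_derivative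
            inner (g (x + t *\<^sub>R v) - g x) v - L / 2 * (2 * t) * (norm v)\<^sup>2) (at t)"
      unfolding \<phi>_def inner_diff_left
      using has_real_derivative_along_line[OF grad, of x v t]
      by (auto intro!: derivative_eq_intros)
    moreover have "inner (g (x + t *\<^sub>R v) - g x) v \<le> L * t * (norm v)\<^sup>2"
    proof -
      have "inner (g (x + t *\<^sub>R v) - g x) v \<le> norm (g (x + t *\<^sub>R v) - g x) * norm v"
        by (rule norm_cauchy_schwarz)
      also have "\<dots> \<le> (L * norm (t *\<^sub>R v)) * norm v"
        using Lip[of "x + t *\<^sub>R v" x] by (intro mult_right_mono) auto
      finally show ?thesis
        using t by (simp add: power2_eq_square)
    qed
    ultimately show "\<exists>y. (\<phi> has_real_derivative y) (at t) \<and> y \<le> 0"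
      by force
  qed simp
  then show ?thesis
    by (simp add: \<phi>_def v_def)
qed

text \<open>The point u is reached from y by a gradient step of length 1/L for the function
  f - inner (g x), which is minimised at x.\<close>
lemma convex_lipschitz_gradient_lower_bound:
  fixes f :: "'a::real_inner \<Rightarrow> real"
  assumes conv: "convex_on UNIV f"
    and grad: "\<And>x. (f has_derivative (\<lambda>v. inner (g x) v)) (at x)"
    and Lip: "\<And>x y. norm (g x - g y) \<le> L * norm (x - y)"
    and Lpos: "L > 0"
  shows "f x + inner (g x) (y - x) + (norm (g y - g x))\<^sup>2 / (2 * L) \<le> f y"
proof -
  define v where "v = g y - g x"
  define u where "u = y - (1 / L) *\<^sub>R v"
  have upper: "f u \<le> f y + inner (g y) (u - y) + L / 2 * (norm (u - y))\<^sup>2"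
    by (rule lipschitz_gradient_upper_bound[OF grad Lip])
  have tangent: "f x + inner (g x) (u - x) \<le> f u"
    by (rule convex_on_above_tangent_gradient[OF conv grad])
  have "inner v (u - y) = - (norm v)\<^sup>2 / L" "(norm (u - y))\<^sup>2 = (norm v)\<^sup>2 / L\<^sup>2"
    by (simp_all add: u_def power2_norm_eq_inner power_divide)
  then have "inner (g y - g x) (u - y) + L / 2 * (norm (u - y))\<^sup>2 = - ((norm v)\<^sup>2 / (2 * L))"
    using Lpos by (simp add: v_def power2_eq_square field_simps)
  moreover have "inner (g x) (u - x) = inner (g x) (y - x) + inner (g x) (u - y)"
    by (simp add: inner_diff_right)
  ultimately show ?thesis
    using upper tangent unfolding v_def inner_diff_left by linarith
qed

lemma convex_lipschitz_gradient_cocoercive: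
  fixes f :: "'a::real_inner \<Rightarrow> real"
  assumes conv: "convex_on UNIV f"
    and grad: "\<And>x. (f has_derivative (\<lambda>v. inner (g x) v)) (at x)"
    and Lip: "\<And>x y. norm (g x - g y) \<le> L * norm (x - y)"
    and Lpos: "L > 0"
  shows "(norm (g x - g y))\<^sup>2 / L \<le> inner (g x - g y) (x - y)"
  using convex_lipschitz_gradient_lower_bound[OF conv grad Lip Lpos, of x y]
    convex_lipschitz_gradient_lower_bound[OF conv grad Lip Lpos, of y x]
  by (simp add: norm_minus_commute inner_diff_left inner_diff_right inner_commute)

lemma norm_relaxed_halfspace_step:
  fixes u d :: "'a::real_inner"
  assumes "\<phi> \<le> inner d u" "0 \<le> \<phi>" "0 \<le> \<eta>"
  shows "(norm (u - (\<eta> * (\<phi> / (norm d)\<^sup>2)) *\<^sub>R d))\<^sup>2 \<le> (norm u)\<^sup>2 - \<eta> * (2 - \<eta>) * (\<phi>\<^sup>2 / (norm d)\<^sup>2)"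
proof (cases "d = 0")
  case False
  define a where "a = \<eta> * (\<phi> / (norm d)\<^sup>2)"
  have "0 \<le> a"
    using assms by (simp add: a_def)
  have "(norm (u - a *\<^sub>R d))\<^sup>2 = (norm u)\<^sup>2 - 2 * a * inner d u + a\<^sup>2 * (norm d)\<^sup>2"
    unfolding power2_norm_eq_inner
    by (simp add: inner_diff_left inner_diff_right inner_commute power2_eq_square algebra_simps)
  also have "\<dots> \<le> (norm u)\<^sup>2 - 2 * a * \<phi> + a\<^sup>2 * (norm d)\<^sup>2"
    using mult_left_mono[OF assms(1), of "2 * a"] \<open>0 \<le> a\<close> by simp
  also have "\<dots> = (norm u)\<^sup>2 - \<eta> * (2 - \<eta>) * (\<phi>\<^sup>2 / (norm d)\<^sup>2)"
    using False by (simp add: a_def power2_eq_square field_simps)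
  finally show ?thesis
    by (simp add: a_def)
qed simp

lemma norm_add_scaleR_sq_le:
  fixes w e :: "'a::real_normed_vector"
  assumes "norm e \<le> \<nu> * norm w" "0 \<le> \<beta>"
  shows "(norm (w + \<beta> *\<^sub>R e))\<^sup>2 \<le> (2 + 2 * \<beta>\<^sup>2 * \<nu>\<^sup>2) * (norm w)\<^sup>2"
proof -
  have "norm (w + \<beta> *\<^sub>R e) \<le> norm w + \<beta> * (\<nu> * norm w)"
    using norm_triangle_ineq[of w "\<beta> *\<^sub>R e"] mult_left_mono[OF assms] assms(2) by simp
  moreover have "0 \<le> \<beta> * (\<nu> * norm w)"
    using assms order_trans[OF norm_ge_zero assms(1)] by simp
  ultimately have "(norm (w + \<beta> *\<^sub>R e))\<^sup>2 \<le> (norm w + \<beta> * (\<nu> * norm w))\<^sup>2"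
    by (intro power_mono) auto
  also have "\<dots> \<le> 2 * (norm w)\<^sup>2 + 2 * (\<beta> * (\<nu> * norm w))\<^sup>2"
    unfolding power2_sum using sum_squares_bound[of "norm w" "\<beta> * (\<nu> * norm w)"] by linarith
  finally show ?thesis
    by (simp add: power_mult_distrib algebra_simps)
qed

lemma alg3_r_le_Lipschitz:
  fixes g :: "'a::real_normed_vector \<Rightarrow> 'a"
  assumes Lip: "\<And>x y. norm (g x - g y) \<le> L * norm (x - y)"
    and "g x \<noteq> 0" "0 < \<gamma>"
  shows "alg3_r g x \<gamma> \<le> L * \<gamma>"
proof -
  have step: "norm ((x - \<gamma> *\<^sub>R g x) - x) = \<gamma> * norm (g x)" "0 < \<gamma> * norm (g x)"
    using assms by auto
  have "alg3_r g x \<gamma> = \<gamma> * norm (g (x - \<gamma> *\<^sub>R g x) - g x) / (\<gamma> * norm (g x))"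
    unfolding alg3_r_def step(1) ..
  also have "\<dots> \<le> \<gamma> * (L * (\<gamma> * norm (g x))) / (\<gamma> * norm (g x))"
    using Lip[of "x - \<gamma> *\<^sub>R g x" x] step \<open>0 < \<gamma>\<close> by (intro divide_right_mono mult_left_mono) auto
  also have "\<dots> = L * \<gamma>"
    using \<open>g x \<noteq> 0\<close> \<open>0 < \<gamma>\<close> by simp
  finally show ?thesis .
qed

lemma alg3_bt_le_power:
  assumes "\<forall>j<l. \<nu> < alg3_r g x (alg3_bt g \<theta> x \<gamma> j)"
    and "0 \<le> \<nu>" "0 < \<theta>" "0 < \<gamma>"
  shows "0 < alg3_bt g \<theta> x \<gamma> l \<and> alg3_bt g \<theta> x \<gamma> l \<le> \<theta> ^ l * \<gamma>"
  using assms(1)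
proof (induction l)
  case (Suc l)
  let ?b = "alg3_bt g \<theta> x \<gamma> l" and ?m = "min 1 (1 / alg3_r g x (alg3_bt g \<theta> x \<gamma> l))"
  have IH: "0 < ?b" "?b \<le> \<theta> ^ l * \<gamma>" and "\<nu> < alg3_r g x ?b"
    using Suc by auto
  then have m: "0 < ?m" "?m \<le> 1"
    using \<open>0 \<le> \<nu>\<close> by auto
  have "?b * \<theta> * ?m \<le> ?b * \<theta>"
    using mult_left_le[OF m(2), of "?b * \<theta>"] IH \<open>0 < \<theta>\<close> by simp
  also have "\<dots> \<le> \<theta> ^ Suc l * \<gamma>"
    using IH \<open>0 < \<theta>\<close> by (simp add: mult_ac)
  finally show ?case
    using IH m \<open>0 < \<theta>\<close> by simp
qed (use \<open>0 < \<gamma>\<close> in simp)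

lemma alg3_backtracking_terminates:
  fixes g :: "'a::real_normed_vector \<Rightarrow> 'a"
  assumes Lip: "\<And>x y. norm (g x - g y) \<le> L * norm (x - y)"
    and "0 < L" "g x \<noteq> 0" "0 < \<nu>" "0 < \<theta>" "\<theta> < 1" "0 < \<gamma>"
  shows "\<exists>l. alg3_r g x (alg3_bt g \<theta> x \<gamma> l) \<le> \<nu>"
proof (rule ccontr)
  assume none: "\<not> ?thesis"
  then have bt: "0 < alg3_bt g \<theta> x \<gamma> l \<and> alg3_bt g \<theta> x \<gamma> l \<le> \<theta> ^ l * \<gamma>" for l
    using assms alg3_bt_le_power[of l \<nu> g x \<theta> \<gamma>] by (simp add: not_le)
  obtain l where l: "\<theta> ^ l < \<nu> / (L * \<gamma>)"
    using real_arch_pow_inv[of "\<nu> / (L * \<gamma>)" \<theta>] assms by auto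
  have "alg3_r g x (alg3_bt g \<theta> x \<gamma> l) \<le> L * alg3_bt g \<theta> x \<gamma> l"
    using alg3_r_le_Lipschitz[OF Lip \<open>g x \<noteq> 0\<close>] bt[of l] by blast
  also have "\<dots> \<le> L * (\<theta> ^ l * \<gamma>)"
    using bt[of l] \<open>0 < L\<close> by (intro mult_left_mono) auto
  also have "\<dots> < \<nu>"
    using l assms by (simp add: field_simps)
  finally show False
    using none less_imp_le by blast
qed

lemma alg3_h_bounds:
  fixes g :: "'a::real_normed_vector \<Rightarrow> 'a"
  assumes Lip: "\<And>x y. norm (g x - g y) \<le> L * norm (x - y)"
    and "0 < L" "g x \<noteq> 0" "0 < \<nu>" "0 < \<theta>" "\<theta> < 1" "0 < \<gamma>"
  shows "0 < alg3_h g \<nu> \<theta> x \<gamma> \<and> alg3_h g \<nu> \<theta> x \<gamma> \<le> \<gamma>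
    \<and> alg3_r g x (alg3_h g \<nu> \<theta> x \<gamma>) \<le> \<nu>"
proof -
  define P where "P l \<longleftrightarrow> alg3_r g x (alg3_bt g \<theta> x \<gamma> l) \<le> \<nu>" for l
  define n where "n = (LEAST l. P l)"
  have "\<exists>l. P l"
    unfolding P_def by (rule alg3_backtracking_terminates[OF Lip assms(2-)])
  then have "P n" "\<forall>j<n. \<not> P j"
    unfolding n_def by (auto intro: LeastI_ex dest: not_less_Least)
  then have "0 < alg3_bt g \<theta> x \<gamma> n \<and> alg3_bt g \<theta> x \<gamma> n \<le> \<theta> ^ n * \<gamma>"
    using alg3_bt_le_power[of n \<nu> g x \<theta> \<gamma>] assms by (simp add: P_def not_le)
  moreover have "\<theta> ^ n * \<gamma> \<le> \<gamma>"
    using assms by (simp add: power_le_one mult_left_le_one_le)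
  moreover have "alg3_h g \<nu> \<theta> x \<gamma> = alg3_bt g \<theta> x \<gamma> n"
    by (simp add: alg3_h_def n_def P_def)
  ultimately show ?thesis
    using \<open>P n\<close> unfolding P_def by simp
qed

lemma alg3_r_le_imp_gradient_change_le:
  assumes "g x \<noteq> 0" "0 < h" "alg3_r g x h \<le> \<nu>"
  shows "norm (h *\<^sub>R (g (x - h *\<^sub>R g x) - g x)) \<le> \<nu> * norm (h *\<^sub>R g x)"
proof -
  have "0 < h * norm (g x)"
    using assms by simp
  moreover have "alg3_r g x h = h * norm (g (x - h *\<^sub>R g x) - g x) / (h * norm (g x))"
    using \<open>0 < h\<close> by (simp add: alg3_r_def)
  ultimately have "h * norm (g (x - h *\<^sub>R g x) - g x) \<le> \<nu> * (h * norm (g x))"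
    using assms(3) by (simp only: pos_divide_le_eq)
  then show ?thesis
    using \<open>0 < h\<close> by simp
qed

lemma alg3_numerator_le_inner:
  fixes f :: "'a::real_inner \<Rightarrow> real"
  assumes conv: "convex_on UNIV f"
    and grad: "\<And>x. (f has_derivative (\<lambda>v. inner (g x) v)) (at x)"
    and Lip: "\<And>x y. norm (g x - g y) \<le> L * norm (x - y)"
    and "0 < L" "g xs = 0" "0 \<le> \<beta>" "\<beta> \<le> 1" "0 < h"
    and z: "z = x - h *\<^sub>R g x"
  shows "(1 - \<beta>) * (1 - L * h / 4) * (norm (x - z))\<^sup>2 + \<beta> * inner (x - z) (h *\<^sub>R g z)
    \<le> inner (h *\<^sub>R (g x - \<beta> *\<^sub>R (g x - g z))) (x - xs)"
proof -
  note cocoercive = convex_lipschitz_gradient_cocoercive[OF conv grad Lip \<open>0 < L\<close>]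
  define w where "w = x - z"
  have w: "w = h *\<^sub>R g x"
    by (simp add: w_def z)
  have "(1 - L * h / 4) * (norm w)\<^sup>2 \<le> inner w (x - xs)"
  proof -
    have "1 - L * h / 4 \<le> 1 / (L * h)"
      using \<open>0 < L\<close> \<open>0 < h\<close> zero_le_power2[of "L * h - 2"]
      by (simp add: field_simps power2_eq_square)
    then have "(1 - L * h / 4) * (norm w)\<^sup>2 \<le> 1 / (L * h) * (norm w)\<^sup>2"
      by (rule mult_right_mono) simp
    also have "\<dots> = h * ((norm (g x))\<^sup>2 / L)"
      using \<open>0 < L\<close> \<open>0 < h\<close> by (simp add: w power2_eq_square field_simps)
    also have "\<dots> \<le> inner w (x - xs)"
      using mult_left_mono[OF cocoercive[of x xs]] \<open>g xs = 0\<close> \<open>0 < h\<close> by (simp add: w)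
    finally show ?thesis .
  qed
  moreover have "inner w (h *\<^sub>R g z) \<le> inner (h *\<^sub>R g z) (x - xs)"
  proof -
    have "0 \<le> (norm (g z))\<^sup>2 / L"
      using \<open>0 < L\<close> by simp
    also have "\<dots> \<le> inner (g z) (z - xs)"
      using cocoercive[of z xs] \<open>g xs = 0\<close> by simp
    finally have "0 \<le> h * inner (g z) (z - xs)"
      using \<open>0 < h\<close> by simp
    moreover have "inner (h *\<^sub>R g z) (x - xs) = inner w (h *\<^sub>R g z) + h * inner (g z) (z - xs)"
      by (simp add: w_def inner_diff_right inner_commute algebra_simps)
    ultimately show ?thesis
      by simp
  qed
  moreover have "h *\<^sub>R (g x - \<beta> *\<^sub>R (g x - g z)) = (1 - \<beta>) *\<^sub>R w + \<beta> *\<^sub>R (h *\<^sub>R g z)"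
    by (simp add: w algebra_simps)
  ultimately show ?thesis
    using \<open>0 \<le> \<beta>\<close> \<open>\<beta> \<le> 1\<close>
    by (simp add: inner_add_left w_def[symmetric] add_mono mult_left_mono mult.assoc)
qed

lemma alg3_numerator_lower_bound:
  fixes g :: "'a::real_inner \<Rightarrow> 'a"
  assumes e: "norm (h *\<^sub>R (g z - g x)) \<le> \<nu> * norm (x - z)"
    and z: "z = x - h *\<^sub>R g x"
    and "0 \<le> L" "h \<le> hu" "0 \<le> \<beta>" "\<beta> \<le> 1"
  shows "((1 - \<beta>) * (1 - L * hu / 4) + \<beta> * (1 - \<nu>)) * (norm (x - z))\<^sup>2
    \<le> (1 - \<beta>) * (1 - L * h / 4) * (norm (x - z))\<^sup>2 + \<beta> * inner (x - z) (h *\<^sub>R g z)"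
proof -
  define w where "w = x - z"
  define e where "e = h *\<^sub>R (g z - g x)"
  have "(1 - L * hu / 4) * (norm w)\<^sup>2 \<le> (1 - L * h / 4) * (norm w)\<^sup>2"
    using \<open>0 \<le> L\<close> \<open>h \<le> hu\<close> by (intro mult_right_mono) (auto intro: mult_left_mono)
  moreover have "(1 - \<nu>) * (norm w)\<^sup>2 \<le> inner w (h *\<^sub>R g z)"
  proof -
    have "- inner w e \<le> norm w * norm e"
      using Cauchy_Schwarz_ineq2[of w e] by linarith
    also have "\<dots> \<le> \<nu> * (norm w)\<^sup>2"
      using mult_left_mono[OF e[folded w_def e_def], of "norm w"]
      by (simp add: power2_eq_square mult_ac)
    moreover have "h *\<^sub>R g z = w + e"
      by (simp add: w_def e_def z algebra_simps)
    ultimately show ?thesis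
      by (simp add: inner_add_right power2_norm_eq_inner algebra_simps)
  qed
  ultimately have "(1 - \<beta>) * ((1 - L * hu / 4) * (norm w)\<^sup>2) + \<beta> * ((1 - \<nu>) * (norm w)\<^sup>2)
      \<le> (1 - \<beta>) * ((1 - L * h / 4) * (norm w)\<^sup>2) + \<beta> * inner w (h *\<^sub>R g z)"
    using \<open>0 \<le> \<beta>\<close> \<open>\<beta> \<le> 1\<close> by (intro add_mono mult_left_mono) auto
  then show ?thesis
    unfolding w_def by (simp add: algebra_simps)
qed

lemma alg3_descent_factor_pos:
  fixes L :: real
  assumes "0 < L" "hu < 4 / L" "0 \<le> \<beta>" "\<beta> \<le> 1" "\<nu> < 1"
  shows "0 < (1 - \<beta>) * (1 - L * hu / 4) + \<beta> * (1 - \<nu>)"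
proof -
  have "0 < 1 - L * hu / 4"
    using assms by (simp add: field_simps)
  then show ?thesis
    using assms by (cases "\<beta> = 1") (auto intro!: add_pos_nonneg)
qed

lemma alg3_step_fejer:
  fixes f :: "'a::real_inner \<Rightarrow> real"
  assumes conv: "convex_on UNIV f"
    and grad: "\<And>x. (f has_derivative (\<lambda>v. inner (g x) v)) (at x)"
    and Lip: "\<And>x y. norm (g x - g y) \<le> L * norm (x - y)"
    and "0 < L" "g xs = 0" "0 < h" "h \<le> hu" "hu < 4 / L" "0 \<le> \<beta>" "\<beta> \<le> 1" "\<nu> < 1"
    and "0 \<le> \<eta>" "\<eta> \<le> 2" "g x \<noteq> 0" "alg3_r g x h \<le> \<nu>"
    and z: "z = x - h *\<^sub>R g x"
  defines "c \<equiv> (1 - \<beta>) * (1 - L * hu / 4) + \<beta> * (1 - \<nu>)"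
  shows "(norm (x - (\<eta> * alg3_alpha L \<beta> g x h z * h) *\<^sub>R (g x - \<beta> *\<^sub>R (g x - g z)) - xs))\<^sup>2
    \<le> (norm (x - xs))\<^sup>2 - \<eta> * (2 - \<eta>) * (c / (2 + 2 * \<beta>\<^sup>2 * \<nu>\<^sup>2)) * c * (norm (x - z))\<^sup>2"
proof -
  define W where "W = (norm (x - z))\<^sup>2"
  define d where "d = h *\<^sub>R (g x - \<beta> *\<^sub>R (g x - g z))"
  define \<phi> where "\<phi> = (1 - \<beta>) * (1 - L * h / 4) * W + \<beta> * inner (x - z) (h *\<^sub>R g z)"
  define K where "K = 2 + 2 * \<beta>\<^sup>2 * \<nu>\<^sup>2"
  have "0 < c"
    unfolding c_def using assms by (intro alg3_descent_factor_pos) auto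
  have "0 < W"
    using assms by (simp add: W_def z)
  have e: "norm (h *\<^sub>R (g z - g x)) \<le> \<nu> * norm (x - z)"
    using alg3_r_le_imp_gradient_change_le[of g x h \<nu>] assms by (simp add: z)
  have cW: "c * W \<le> \<phi>"
    unfolding c_def W_def \<phi>_def using assms by (intro alg3_numerator_lower_bound[OF e z]) auto
  have \<phi>_le: "\<phi> \<le> inner d (x - xs)"
    unfolding \<phi>_def W_def d_def using assms by (intro alg3_numerator_le_inner[OF conv grad Lip]) auto
  have "d = (x - z) + \<beta> *\<^sub>R (h *\<^sub>R (g z - g x))"
    by (simp add: d_def z algebra_simps)
  then have d_le: "(norm d)\<^sup>2 \<le> K * W"
    unfolding K_def W_def using norm_add_scaleR_sq_le[OF e \<open>0 \<le> \<beta>\<close>] by simp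
  have "0 < \<phi>"
    using cW mult_pos_pos[OF \<open>0 < c\<close> \<open>0 < W\<close>] by linarith
  then have "0 < (norm d)\<^sup>2"
    using \<phi>_le by auto
  have update: "x - (\<eta> * alg3_alpha L \<beta> g x h z * h) *\<^sub>R (g x - \<beta> *\<^sub>R (g x - g z)) - xs
      = (x - xs) - (\<eta> * (\<phi> / (norm d)\<^sup>2)) *\<^sub>R d"
    using \<open>0 < h\<close>
    by (simp add: alg3_alpha_def \<phi>_def W_def d_def power_mult_distrib power2_eq_square)
  have "(norm (x - (\<eta> * alg3_alpha L \<beta> g x h z * h) *\<^sub>R (g x - \<beta> *\<^sub>R (g x - g z)) - xs))\<^sup>2
      \<le> (norm (x - xs))\<^sup>2 - \<eta> * (2 - \<eta>) * (\<phi>\<^sup>2 / (norm d)\<^sup>2)"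
    unfolding update using \<open>0 < \<phi>\<close> \<open>0 \<le> \<eta>\<close> by (intro norm_relaxed_halfspace_step[OF \<phi>_le]) auto
  also have "\<dots> \<le> (norm (x - xs))\<^sup>2 - \<eta> * (2 - \<eta>) * ((c * W)\<^sup>2 / (K * W))"
  proof -
    have "(c * W)\<^sup>2 / (K * W) \<le> \<phi>\<^sup>2 / (norm d)\<^sup>2"
      using cW \<open>0 < c\<close> \<open>0 < W\<close> \<open>0 < (norm d)\<^sup>2\<close> d_le
      by (intro frac_le power_mono) auto
    then show ?thesis
      using mult_left_mono[of _ _ "\<eta> * (2 - \<eta>)"] \<open>0 \<le> \<eta>\<close> \<open>\<eta> \<le> 2\<close> by force
  qed
  also have "\<dots> = (norm (x - xs))\<^sup>2 - \<eta> * (2 - \<eta>) * (c / K) * c * W"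
    using \<open>0 < W\<close> by (simp add: power2_eq_square)
  finally show ?thesis
    by (simp add: K_def W_def)
qed

lemma alg3_step_size_bounds:
  assumes "0 < hl" "hl \<le> hu" "0 < \<gamma>00" "\<gamma>00 \<le> hu"
  shows "0 < snd (alg3_state g L \<mu> \<nu> hl hu \<beta> \<theta> \<tau> \<eta> x0 \<gamma>00 k)
    \<and> snd (alg3_state g L \<mu> \<nu> hl hu \<beta> \<theta> \<tau> \<eta> x0 \<gamma>00 k) \<le> hu"
proof (cases k)
  case (Suc j)
  obtain x \<gamma> where "alg3_state g L \<mu> \<nu> hl hu \<beta> \<theta> \<tau> \<eta> x0 \<gamma>00 j = (x, \<gamma>)"
    by fastforce
  then show ?thesis
    using assms by (simp add: Suc Let_def proj_interval_def less_max_iff_disj)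
qed (use assms in simp)

theorem proposition3:
  fixes f :: "real ^ 'n \<Rightarrow> real" and g :: "real ^ 'n \<Rightarrow> real ^ 'n"
    and L \<mu> \<nu> hl hu \<beta> \<theta> \<tau> \<eta> \<gamma>00 :: real and x0 :: "real ^ 'n"
  assumes conv: "convex_on UNIV f"
    and grad: "\<And>x. (f has_derivative (\<lambda>v. inner (g x) v)) (at x)"
    and Lpos: "L > 0"
    and Lip: "\<And>x y. norm (g x - g y) \<le> L * norm (x - y)"
    and Xne: "{x. g x = 0} \<noteq> {}"
    and mu: "0 < \<mu>" "\<mu> < \<nu>" "\<nu> < 1"
    and hbounds: "0 < hl" "hl < 1" "1 \<le> \<gamma>00" "\<gamma>00 \<le> hu" "hu < 4 / L"
    and beta: "0 \<le> \<beta>" "\<beta> \<le> 1"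
    and theta: "0 < \<theta>" "\<theta> < 1"
    and tau: "\<tau> > 1"
    and eta: "0 < \<eta>" "\<eta> < 2"
    and nonstop: "\<And>k. g (alg3_x g L \<mu> \<nu> hl hu \<beta> \<theta> \<tau> \<eta> x0 \<gamma>00 k) \<noteq> 0"
  shows "(let \<alpha>min = ((1 - \<beta>) * (1 - L * hu / 4) + \<beta> * (1 - \<nu>)) / (2 + 2 * \<beta>\<^sup>2 * \<nu>\<^sup>2);
              \<kappa>4 = \<eta> * (2 - \<eta>) * \<alpha>min * ((1 - \<beta>) * (1 - L * hu / 4) + \<beta> * (1 - \<nu>))
          in \<kappa>4 > 0 \<and>
             (\<forall>xs \<in> {x. g x = 0}. \<forall>k.
                (norm (alg3_x g L \<mu> \<nu> hl hu \<beta> \<theta> \<tau> \<eta> x0 \<gamma>00 (Suc k) - xs))\<^sup>2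
                \<le> (norm (alg3_x g L \<mu> \<nu> hl hu \<beta> \<theta> \<tau> \<eta> x0 \<gamma>00 k - xs))\<^sup>2
                  - \<kappa>4 * (norm (alg3_x g L \<mu> \<nu> hl hu \<beta> \<theta> \<tau> \<eta> x0 \<gamma>00 k
                                 - alg3_z g L \<mu> \<nu> hl hu \<beta> \<theta> \<tau> \<eta> x0 \<gamma>00 k))\<^sup>2))"
proof -
  have c: "0 < (1 - \<beta>) * (1 - L * hu / 4) + \<beta> * (1 - \<nu>)"
    using Lpos hbounds beta mu by (intro alg3_descent_factor_pos)
  have fejer: "(norm (alg3_x g L \<mu> \<nu> hl hu \<beta> \<theta> \<tau> \<eta> x0 \<gamma>00 (Suc k) - xs))\<^sup>2
      \<le> (norm (alg3_x g L \<mu> \<nu> hl hu \<beta> \<theta> \<tau> \<eta> x0 \<gamma>00 k - xs))\<^sup>2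
        - \<eta> * (2 - \<eta>) * (((1 - \<beta>) * (1 - L * hu / 4) + \<beta> * (1 - \<nu>)) / (2 + 2 * \<beta>\<^sup>2 * \<nu>\<^sup>2))
          * ((1 - \<beta>) * (1 - L * hu / 4) + \<beta> * (1 - \<nu>))
          * (norm (alg3_x g L \<mu> \<nu> hl hu \<beta> \<theta> \<tau> \<eta> x0 \<gamma>00 k
                   - alg3_z g L \<mu> \<nu> hl hu \<beta> \<theta> \<tau> \<eta> x0 \<gamma>00 k))\<^sup>2"
    if "g xs = 0" for xs k
  proof -
    obtain x \<gamma> where s: "alg3_state g L \<mu> \<nu> hl hu \<beta> \<theta> \<tau> \<eta> x0 \<gamma>00 k = (x, \<gamma>)"
      by fastforce
    have "0 < \<gamma>" "\<gamma> \<le> hu"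
      using alg3_step_size_bounds[of hl hu \<gamma>00 g L \<mu> \<nu> \<beta> \<theta> \<tau> \<eta> x0 k] hbounds
      by (simp_all add: s)
    moreover have "g x \<noteq> 0"
      using nonstop[of k] by (simp add: alg3_x_def s)
    ultimately have "0 < alg3_h g \<nu> \<theta> x \<gamma>" "alg3_h g \<nu> \<theta> x \<gamma> \<le> hu"
      "alg3_r g x (alg3_h g \<nu> \<theta> x \<gamma>) \<le> \<nu>"
      using alg3_h_bounds[OF Lip Lpos \<open>g x \<noteq> 0\<close>, of \<nu> \<theta> \<gamma>] mu theta by auto
    then show ?thesis
      using alg3_step_fejer[OF conv grad Lip Lpos \<open>g xs = 0\<close>, where x = x and \<nu> = \<nu> and hu = hu]
        hbounds beta mu eta \<open>g x \<noteq> 0\<close>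
      by (simp add: alg3_x_def alg3_z_def s Let_def mult.assoc)
  qed
  moreover have "0 < \<eta> * (2 - \<eta>)
      * (((1 - \<beta>) * (1 - L * hu / 4) + \<beta> * (1 - \<nu>)) / (2 + 2 * \<beta>\<^sup>2 * \<nu>\<^sup>2))
      * ((1 - \<beta>) * (1 - L * hu / 4) + \<beta> * (1 - \<nu>))"
    using c eta by (intro mult_pos_pos divide_pos_pos) (auto intro: add_pos_nonneg)
  ultimately show ?thesis
    unfolding Let_def by blast
qed

end
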